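(* Let $n,k_1,k_2$ be nonnegative integers with $k_1+k_2\le n$ and $\ell=n-k_1-k_2$. If $G\in\mathcal{U}$, then there is a matrix $G'\in\mathcal{V}$ such that the $\mathbb{Z}_4$-codes with generator matrices $G$ and $G'$ are equivalent.
   Context: $\mathbb{Z}_4=\{0,1,2,3\}$ is the ring of integers modulo $4$; a $\mathbb{Z}_4$-code of length $n$ is a submodule of $\mathbb{Z}_4^n$, and two codes are equivalent if one is obtained from the other by permuting coordinates and changing the signs of some coordinates. Order $\mathbb{Z}_4$ by $0<1<2<3$ and order vectors of $\mathbb{Z}_4^m$ lexicographically. Let $M_{m\times n}(R)$ denote the set of $m\times n$ matrices with entries in $R$. For $T\subset M_{m\times n}(\mathbb{Z}_4)$ let $P_{row}(T)$ be the set of matrices in $T$ whose rows $a_1,\dots,a_m$ satisfy $a_i\le a_j$ whenever $i\le j$, and $P_{col}(T)$ the set of matrices in $T$ whose columns $b_1,\dots,b_n$ satisfy $b_i^T\le b_j^T$ whenever $i\le j$. For $(0,1)$-matrices $A$ ($k_1\times k_2$), $D$ ($k_2\times\ell$) and a $\mathbb{Z}_4$-matrix $B$ ($k_1\times\ell$), let $G(A,B,D)=\begin{pmatrix} I_{k_1} & A & B\\ O & 2I_{k_2} & 2D\end{pmatrix}$. Let $\mathcal{S}=\{G(A,B,D)\mid A\in M_{k_1\times k_2}(\{0,1\}),\ B\in M_{k_1\times\ell}(\mathbb{Z}_4),\ D\in M_{k_2\times\ell}(\{0,1\})\}$, $\mathcal{T}=\{G(A,B,D)\in\mathcal{S}\mid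 A\in P_{row}(M_{k_1\times k_2}(\{0,1\}))\}$. Let $\mathcal{B}$ be the set consisting of all $k_1\times\ell$ matrices with entries in $\{0,2\}$ together with all $k_1\times\ell$ $\mathbb{Z}_4$-matrices $B$ such that, for the smallest $i$ for which the $i$-th row of $B$ contains an entry not in $\{0,2\}$, the $i$-th row of $B$ has all entries in $\{0,1,2\}$. Let $\mathcal{U}=\{G(A,B,D)\in\mathcal{T}\mid B\in\mathcal{B}\}$ and $\mathcal{V}=\{G(A,B,D)\in\mathcal{U}\mid \begin{pmatrix}B\\2D\end{pmatrix}\in P_{col}(M_{(k_1+k_2)\times\ell}(\mathbb{Z}_4))\}$. *)

theory Defs
  imports Main
begin

text \<open>Z4 is represented by the integers {0,1,2,3} with arithmetic mod 4, ordered as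
integers (0<1<2<3). A matrix is a function nat => nat => int; only entries within
the stated dimensions are relevant.\<close>

type_synonym zmat = "nat \<Rightarrow> nat \<Rightarrow> int"

definition entries_in :: "int set \<Rightarrow> nat \<Rightarrow> nat \<Rightarrow> zmat \<Rightarrow> bool" where
  "entries_in R m n M \<longleftrightarrow> (\<forall>i<m. \<forall>j<n. M i j \<in> R)"

abbreviation binmat :: "nat \<Rightarrow> nat \<Rightarrow> zmat \<Rightarrow> bool" where
  "binmat m n M \<equiv> entries_in {0,1} m n M"

abbreviation z4mat :: "nat \<Rightarrow> nat \<Rightarrow> zmat \<Rightarrow> bool" where
  "z4mat m n M \<equiv> entries_in {0,1,2,3} m n M"

definition lex_le :: "nat \<Rightarrow> (nat \<Rightarrow> int) \<Rightarrow> (nat \<Rightarrow> int) \<Rightarrow> bool" where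
  "lex_le m a b \<longleftrightarrow> (\<forall>i<m. a i = b i) \<or>
     (\<exists>i<m. (\<forall>j<i. a j = b j) \<and> a i < b i)"

definition rows_sorted :: "nat \<Rightarrow> nat \<Rightarrow> zmat \<Rightarrow> bool" where
  "rows_sorted m n M \<longleftrightarrow> (\<forall>i j. i \<le> j \<and> j < m \<longrightarrow> lex_le n (M i) (M j))"

definition cols_sorted :: "nat \<Rightarrow> nat \<Rightarrow> zmat \<Rightarrow> bool" where
  "cols_sorted m n M \<longleftrightarrow>
     (\<forall>i j. i \<le> j \<and> j < n \<longrightarrow> lex_le m (\<lambda>r. M r i) (\<lambda>r. M r j))"

text \<open>G(A,B,D) = [I_k1, A, B; O, 2 I_k2, 2 D], a (k1+k2) x (k1+k2+l) matrix
(entries outside the dimensions set to 0).\<close>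
definition Gmat :: "nat \<Rightarrow> nat \<Rightarrow> nat \<Rightarrow> zmat \<Rightarrow> zmat \<Rightarrow> zmat \<Rightarrow> zmat" where
  "Gmat k1 k2 l A B D i j =
    (if i < k1 \<and> j < k1 + k2 + l then
       (if j < k1 then (if i = j then 1 else 0)
        else if j < k1 + k2 then A i (j - k1)
        else B i (j - k1 - k2))
     else if k1 \<le> i \<and> i < k1 + k2 \<and> j < k1 + k2 + l then
       (if j < k1 then 0
        else if j < k1 + k2 then (if i - k1 = j - k1 then 2 else 0)
        else 2 * D (i - k1) (j - k1 - k2))
     else 0)"

definition Sset :: "nat \<Rightarrow> nat \<Rightarrow> nat \<Rightarrow> zmat set" where
  "Sset k1 k2 l = {Gmat k1 k2 l A B D | A B D.
      binmat k1 k2 A \<and> z4mat k1 l B \<and> binmat k2 l D}"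

definition Tset :: "nat \<Rightarrow> nat \<Rightarrow> nat \<Rightarrow> zmat set" where
  "Tset k1 k2 l = {Gmat k1 k2 l A B D | A B D.
      binmat k1 k2 A \<and> rows_sorted k1 k2 A \<and> z4mat k1 l B \<and> binmat k2 l D}"

definition Bset :: "nat \<Rightarrow> nat \<Rightarrow> zmat set" where
  "Bset k1 l = {B. z4mat k1 l B \<and>
     ((\<forall>i<k1. \<forall>j<l. B i j \<in> {0,2}) \<or>
      (\<exists>i<k1. (\<forall>i'<i. \<forall>j<l. B i' j \<in> {0,2}) \<and> (\<exists>j<l. B i j \<notin> {0,2}) \<and>
              (\<forall>j<l. B i j \<in> {0,1,2})))}"

definition Uset :: "nat \<Rightarrow> nat \<Rightarrow> nat \<Rightarrow> zmat set" where
  "Uset k1 k2 l = {Gmat k1 k2 l A B D | A B D.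
      binmat k1 k2 A \<and> rows_sorted k1 k2 A \<and> z4mat k1 l B \<and> binmat k2 l D \<and>
      B \<in> Bset k1 l}"

definition stackBD :: "nat \<Rightarrow> zmat \<Rightarrow> zmat \<Rightarrow> zmat" where
  "stackBD k1 B D i j = (if i < k1 then B i j else 2 * D (i - k1) j)"

definition Vset :: "nat \<Rightarrow> nat \<Rightarrow> nat \<Rightarrow> zmat set" where
  "Vset k1 k2 l = {Gmat k1 k2 l A B D | A B D.
      binmat k1 k2 A \<and> rows_sorted k1 k2 A \<and> z4mat k1 l B \<and> binmat k2 l D \<and>
      B \<in> Bset k1 l \<and> cols_sorted (k1 + k2) l (stackBD k1 B D)}"

definition z4code :: "nat \<Rightarrow> nat \<Rightarrow> zmat \<Rightarrow> (nat \<Rightarrow> int) set" where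
  "z4code m n G = {x. \<exists>c :: nat \<Rightarrow> int.
      \<forall>j. x j = (if j < n then (\<Sum>i<m. c i * G i j) mod 4 else 0)}"

definition z4_equiv :: "nat \<Rightarrow> (nat \<Rightarrow> int) set \<Rightarrow> (nat \<Rightarrow> int) set \<Rightarrow> bool" where
  "z4_equiv n C1 C2 \<longleftrightarrow> (\<exists>\<sigma> \<epsilon>. bij_betw \<sigma> {..<n} {..<n} \<and> (\<forall>j<n. \<epsilon> j \<in> {1, -1 :: int}) \<and>
      C2 = (\<lambda>x j. if j < n then (\<epsilon> j * x (\<sigma> j)) mod 4 else 0) ` C1)"

end

theory Submission
  imports Defs "HOL-Library.List_Lexorder"
begin

text \<open>Permuting the last l columns of G(A,B,D) permutes the columns of B and D in the same
way and leaves A untouched; it yields an equivalent code, and the condition B \<in> \<B> only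
looks at the set of entries of each row, so it survives. Choosing the permutation that
sorts the columns of (B; 2D) lexicographically therefore lands in \<V>.\<close>

lemma lex_le_if_map_le:
  fixes f g :: "nat \<Rightarrow> int"
  assumes "map f [0..<m] \<le> map g [0..<m]"
  shows "lex_le m f g"
proof (cases "map f [0..<m] = map g [0..<m]")
  case True
  then have "\<forall>i<m. f i = g i" by (simp add: map_eq_conv)
  then show ?thesis unfolding lex_le_def by blast
next
  case False
  with assms have "(map f [0..<m], map g [0..<m]) \<in> lexord {(u, v). u < v}"
    by (auto simp add: list_le_def list_less_def)
  then obtain i where i: "i < m" "take i (map f [0..<m]) = take i (map g [0..<m])"
    "f i < g i"
    unfolding lexord_take_index_conv by auto
  have "f j = g j" if "j < i" for j
  proof -
    have "f j = take i (map f [0..<m]) ! j" using that i(1) by simp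
    also have "\<dots> = take i (map g [0..<m]) ! j" using i(2) by (rule arg_cong)
    also have "\<dots> = g j" using that i(1) by simp
    finally show ?thesis .
  qed
  then show ?thesis unfolding lex_le_def using i by blast
qed

lemma exists_perm_cols_sorted:
  fixes S :: zmat
  shows "\<exists>\<sigma>. bij_betw \<sigma> {..<l} {..<l} \<and> cols_sorted m l (\<lambda>r j. S r (\<sigma> j))"
proof -
  define key where "key = (\<lambda>j. map (\<lambda>r. S r j) [0..<m])"
  define xs where "xs = sort_key key [0..<l]"
  have len: "length xs = l" and "set xs = {..<l}" and "distinct xs"
    unfolding xs_def by auto
  then have bij: "bij_betw ((!) xs) {..<l} {..<l}"
    by (intro bij_betw_nth) auto
  have sorted: "sorted (map key xs)" unfolding xs_def by simp
  have "lex_le m (\<lambda>r. S r (xs ! i)) (\<lambda>r. S r (xs ! j))" if "i \<le> j" "j < l" for i j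
  proof -
    have "map key xs ! i \<le> map key xs ! j"
      using sorted that len by (simp add: sorted_iff_nth_mono)
    then have "key (xs ! i) \<le> key (xs ! j)" using that len by simp
    then show ?thesis unfolding key_def by (rule lex_le_if_map_le)
  qed
  then show ?thesis using bij unfolding cols_sorted_def by blast
qed

lemma bij_betw_fix_prefix:
  fixes \<sigma> :: "nat \<Rightarrow> nat"
  assumes "bij_betw \<sigma> {..<l} {..<l}"
  shows "bij_betw (\<lambda>j. if j < k then j else k + \<sigma> (j - k)) {..<k + l} {..<k + l}"
    (is "bij_betw ?\<tau> _ _")
proof -
  have "bij_betw ((+) k \<circ> \<sigma> \<circ> (\<lambda>j. j - k)) ((+) k ` {..<l}) ((+) k ` {..<l})"
    by (intro bij_betw_trans[OF _ bij_betw_trans[OF assms]])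
       (auto simp: bij_betw_def inj_on_def image_image)
  then have "bij_betw ?\<tau> ((+) k ` {..<l}) ((+) k ` {..<l})"
    by (rule bij_betw_cong[THEN iffD1, rotated]) auto
  moreover have "bij_betw ?\<tau> {..<k} {..<k}" by (simp add: bij_betw_def inj_on_def)
  ultimately have "bij_betw ?\<tau> ({..<k} \<union> (+) k ` {..<l}) ({..<k} \<union> (+) k ` {..<l})"
    by (intro bij_betw_combine) auto
  moreover have "{..<k} \<union> (+) k ` {..<l} = {..<k + l}"
  proof -
    have "j \<in> (+) k ` {..<l}" if "k \<le> j" "j < k + l" for j
      using that by (intro image_eqI[of _ _ "j - k"]) auto
    then show ?thesis by (auto simp del: image_add_atLeastLessThan) (meson not_le)
  qed
  ultimately show ?thesis by simp
qed

lemma z4_equiv_permute_cols: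
  assumes \<tau>: "bij_betw \<tau> {..<n} {..<n}"
    and G': "\<And>i j. j < n \<Longrightarrow> G' i j = G i (\<tau> j)"
  shows "z4_equiv n (z4code m n G) (z4code m n G')"
proof -
  have \<tau>_lt: "\<tau> j < n" if "j < n" for j using \<tau> that by (auto simp: bij_betw_def)
  define f where "f = (\<lambda>(x::nat\<Rightarrow>int) j. if j < n then ((1::int) * x (\<tau> j)) mod 4 else 0)"
  have f_word: "f (\<lambda>j. if j < n then (\<Sum>i<m. c i * G i j) mod 4 else 0) =
      (\<lambda>j. if j < n then (\<Sum>i<m. c i * G' i j) mod 4 else 0)" for c
    by (rule ext) (simp add: f_def \<tau>_lt G')
  have "z4code m n G' = f ` z4code m n G"
  proof
    show "z4code m n G' \<subseteq> f ` z4code m n G"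
    proof
      fix y assume "y \<in> z4code m n G'"
      then obtain c where "y = (\<lambda>j. if j < n then (\<Sum>i<m. c i * G' i j) mod 4 else 0)"
        unfolding z4code_def by (auto simp flip: fun_eq_iff)
      then show "y \<in> f ` z4code m n G"
        unfolding z4code_def f_word[symmetric] by blast
    qed
    show "f ` z4code m n G \<subseteq> z4code m n G'"
    proof
      fix y assume "y \<in> f ` z4code m n G"
      then obtain c where "y = f (\<lambda>j. if j < n then (\<Sum>i<m. c i * G i j) mod 4 else 0)"
        unfolding z4code_def by (auto simp flip: fun_eq_iff)
      then show "y \<in> z4code m n G'"
        unfolding z4code_def f_word by blast
    qed
  qed
  then show ?thesis
    unfolding z4_equiv_def f_def using \<tau> by (intro exI[of _ \<tau>] exI[of _ "\<lambda>_. 1"]) simp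
qed

lemma Gmat_permute_last_cols:
  assumes "\<And>j. j < l \<Longrightarrow> \<sigma> j < l" and "j < k1 + k2 + l"
  shows "Gmat k1 k2 l A (\<lambda>i j. B i (\<sigma> j)) (\<lambda>i j. D i (\<sigma> j)) i j =
    Gmat k1 k2 l A B D i (if j < k1 + k2 then j else k1 + k2 + \<sigma> (j - (k1 + k2)))"
proof -
  have "k1 + k2 \<le> j \<Longrightarrow> \<sigma> (j - (k1 + k2)) < l" using assms by simp
  then show ?thesis using assms(2) unfolding Gmat_def by (auto simp: not_less)
qed

lemma Bset_permute_cols:
  assumes "B \<in> Bset k1 l" and \<sigma>: "bij_betw \<sigma> {..<l} {..<l}"
  shows "(\<lambda>i j. B i (\<sigma> j)) \<in> Bset k1 l"
proof -
  have row: "(\<forall>j<l. B i (\<sigma> j) \<in> R) \<longleftrightarrow> (\<forall>j<l. B i j \<in> R)"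
    and ex: "(\<exists>j<l. B i (\<sigma> j) \<notin> R) \<longleftrightarrow> (\<exists>j<l. B i j \<notin> R)" for i and R :: "int set"
    using \<sigma> by (metis bij_betw_iff_bijections lessThan_iff)+
  show ?thesis using assms(1) unfolding Bset_def entries_in_def mem_Collect_eq row ex .
qed

theorem mainTheorem11:
  fixes n k1 k2 l :: nat and G :: zmat
  assumes "k1 + k2 \<le> n"
    and "l = n - k1 - k2"
    and "G \<in> Uset k1 k2 l"
  shows "\<exists>G' \<in> Vset k1 k2 l. z4_equiv n (z4code (k1 + k2) n G) (z4code (k1 + k2) n G')"
proof -
  have n: "n = k1 + k2 + l" using assms(1,2) by simp
  obtain A B D where G: "G = Gmat k1 k2 l A B D" and A: "binmat k1 k2 A"
    "rows_sorted k1 k2 A" and B: "z4mat k1 l B" "B \<in> Bset k1 l" and D: "binmat k2 l D"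
    using assms(3) unfolding Uset_def by blast
  obtain \<sigma> where \<sigma>: "bij_betw \<sigma> {..<l} {..<l}"
    and sorted: "cols_sorted (k1 + k2) l (\<lambda>r j. stackBD k1 B D r (\<sigma> j))"
    using exists_perm_cols_sorted by blast
  have \<sigma>_lt: "\<And>j. j < l \<Longrightarrow> \<sigma> j < l" using \<sigma> by (auto simp: bij_betw_def)
  define B' where "B' = (\<lambda>i j. B i (\<sigma> j))"
  define D' where "D' = (\<lambda>i j. D i (\<sigma> j))"
  have "stackBD k1 B' D' = (\<lambda>r j. stackBD k1 B D r (\<sigma> j))"
    by (simp add: fun_eq_iff stackBD_def B'_def D'_def)
  with sorted have "cols_sorted (k1 + k2) l (stackBD k1 B' D')" by simp
  moreover have "z4mat k1 l B'" "binmat k2 l D'"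
    using B(1) D \<sigma>_lt unfolding B'_def D'_def entries_in_def by auto
  moreover have "B' \<in> Bset k1 l" unfolding B'_def using B(2) \<sigma> by (rule Bset_permute_cols)
  ultimately have "Gmat k1 k2 l A B' D' \<in> Vset k1 k2 l"
    unfolding Vset_def using A by blast
  moreover have "z4_equiv n (z4code (k1 + k2) n G) (z4code (k1 + k2) n (Gmat k1 k2 l A B' D'))"
    using bij_betw_fix_prefix[OF \<sigma>, of "k1 + k2"]
    by (intro z4_equiv_permute_cols) (auto simp: n G B'_def D'_def Gmat_permute_last_cols \<sigma>_lt)
  ultimately show ?thesis by blast
qed

end
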